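(* Let $R$ be a ring with identity and let $a,b,c,y\in R$. Then: (i) If $c$ is regular (i.e. $c=czc$ for some $z\in R$), then $y$ is a left $(b,c)$-inverse of $a$ if and only if $y$ is a right annihilator $(b,c)$-inverse of $a$. (ii) If $b$ is regular (i.e. $b=bzb$ for some $z\in R$), then $y$ is a right $(b,c)$-inverse of $a$ if and only if $y$ is a left annihilator $(b,c)$-inverse of $a$.
   Context: For $x\in R$: $xR=\{xr:r\in R\}$, $Rx=\{rx:r\in R\}$, $x^\circ=\{r\in R: xr=0\}$, ${}^\circ x=\{r\in R: rx=0\}$. An element $y\in R$ is a left $(b,c)$-inverse of $a$ if $Ry\subseteq Rc$ and $yab=b$; a right $(b,c)$-inverse of $a$ if $yR\subseteq bR$ and $cay=c$; a right annihilator $(b,c)$-inverse of $a$ if $c^\circ\subseteq y^\circ$ and $yab=b$; a left annihilator $(b,c)$-inverse of $a$ if ${}^\circ b\subseteq {}^\circ y$ and $cay=c$. *)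

theory Defs
  imports Main
begin

definition left_bc_inverse :: "'a::ring_1 \<Rightarrow> 'a \<Rightarrow> 'a \<Rightarrow> 'a \<Rightarrow> bool" where
  "left_bc_inverse y a b c \<longleftrightarrow>
     {r * y | r. True} \<subseteq> {r * c | r. True} \<and> y * a * b = b"

definition right_bc_inverse :: "'a::ring_1 \<Rightarrow> 'a \<Rightarrow> 'a \<Rightarrow> 'a \<Rightarrow> bool" where
  "right_bc_inverse y a b c \<longleftrightarrow>
     {y * r | r. True} \<subseteq> {b * r | r. True} \<and> c * a * y = c"

definition right_annihilator_bc_inverse :: "'a::ring_1 \<Rightarrow> 'a \<Rightarrow> 'a \<Rightarrow> 'a \<Rightarrow> bool" where
  "right_annihilator_bc_inverse y a b c \<longleftrightarrow>
     {r. c * r = 0} \<subseteq> {r. y * r = 0} \<and> y * a * b = b"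

definition left_annihilator_bc_inverse :: "'a::ring_1 \<Rightarrow> 'a \<Rightarrow> 'a \<Rightarrow> 'a \<Rightarrow> bool" where
  "left_annihilator_bc_inverse y a b c \<longleftrightarrow>
     {r. r * b = 0} \<subseteq> {r. r * y = 0} \<and> c * a * y = c"

definition regular :: "'a::ring_1 \<Rightarrow> bool" where
  "regular c \<longleftrightarrow> (\<exists>z. c = c * z * c)"

end

theory Submission
  imports Defs
begin

text \<open>Both containments \<open>R y \<subseteq> R c\<close> and \<open>c\<^sup>\<circ> \<subseteq> y\<^sup>\<circ>\<close> say that \<open>y \<in> R c\<close>: the first trivially,
  the second because for regular \<open>c = c z c\<close> the element \<open>1 - z c\<close> lies in \<open>c\<^sup>\<circ>\<close>, so
  \<open>y (1 - z c) = 0\<close>, i.e. \<open>y = (y z) c\<close>.\<close>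

lemma left_ideal_subset_iff:
  fixes y c :: "'a::monoid_mult"
  shows "{r * y | r. True} \<subseteq> {r * c | r. True} \<longleftrightarrow> (\<exists>s. y = s * c)"
proof
  assume "{r * y | r. True} \<subseteq> {r * c | r. True}"
  moreover have "y \<in> {r * y | r. True}" by (metis (mono_tags) mem_Collect_eq mult_1)
  ultimately show "\<exists>s. y = s * c" by blast
next
  assume "\<exists>s. y = s * c"
  then obtain s where "y = s * c" ..
  then have "r * y = (r * s) * c" for r by (auto simp: mult.assoc)
  then show "{r * y | r. True} \<subseteq> {r * c | r. True}" by blast
qed

lemma right_ideal_subset_iff:
  fixes y b :: "'a::monoid_mult"
  shows "{y * r | r. True} \<subseteq> {b * r | r. True} \<longleftrightarrow> (\<exists>s. y = b * s)"
proof
  assume "{y * r | r. True} \<subseteq> {b * r | r. True}"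
  moreover have "y \<in> {y * r | r. True}" by (metis (mono_tags) mem_Collect_eq mult_1_right)
  ultimately show "\<exists>s. y = b * s" by blast
next
  assume "\<exists>s. y = b * s"
  then obtain s where "y = b * s" ..
  then have "y * r = b * (s * r)" for r by (auto simp: mult.assoc)
  then show "{y * r | r. True} \<subseteq> {b * r | r. True}" by blast
qed

lemma right_annihilator_subset_iff_left_multiple:
  fixes y c :: "'a::ring_1"
  assumes "regular c"
  shows "{r. c * r = 0} \<subseteq> {r. y * r = 0} \<longleftrightarrow> (\<exists>s. y = s * c)"
proof
  obtain z where z: "c = c * z * c" using assms unfolding regular_def by blast
  assume ann: "{r. c * r = 0} \<subseteq> {r. y * r = 0}"
  have "c * (1 - z * c) = 0" using z by (simp add: right_diff_distrib mult.assoc)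
  then have "y * (1 - z * c) = 0" using ann by blast
  then have "y = (y * z) * c" by (simp add: right_diff_distrib mult.assoc)
  then show "\<exists>s. y = s * c" ..
next
  assume "\<exists>s. y = s * c"
  then obtain s where "y = s * c" ..
  then show "{r. c * r = 0} \<subseteq> {r. y * r = 0}" by (auto simp: mult.assoc)
qed

lemma left_annihilator_subset_iff_right_multiple:
  fixes y b :: "'a::ring_1"
  assumes "regular b"
  shows "{r. r * b = 0} \<subseteq> {r. r * y = 0} \<longleftrightarrow> (\<exists>s. y = b * s)"
proof
  obtain z where z: "b = b * z * b" using assms unfolding regular_def by blast
  assume ann: "{r. r * b = 0} \<subseteq> {r. r * y = 0}"
  have "(1 - b * z) * b = 0" using z by (simp add: left_diff_distrib)
  then have "(1 - b * z) * y = 0" using ann by blast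
  then have "y = b * (z * y)" by (simp add: left_diff_distrib mult.assoc)
  then show "\<exists>s. y = b * s" ..
next
  assume "\<exists>s. y = b * s"
  then obtain s where "y = b * s" ..
  then show "{r. r * b = 0} \<subseteq> {r. r * y = 0}" by (auto simp flip: mult.assoc)
qed

lemma left_bc_inverse_iff_right_annihilator_bc_inverse:
  fixes a b c y :: "'a::ring_1"
  assumes "regular c"
  shows "left_bc_inverse y a b c \<longleftrightarrow> right_annihilator_bc_inverse y a b c"
  unfolding left_bc_inverse_def right_annihilator_bc_inverse_def left_ideal_subset_iff
    right_annihilator_subset_iff_left_multiple[OF assms] ..

lemma right_bc_inverse_iff_left_annihilator_bc_inverse:
  fixes a b c y :: "'a::ring_1"
  assumes "regular b"
  shows "right_bc_inverse y a b c \<longleftrightarrow> left_annihilator_bc_inverse y a b c"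
  unfolding right_bc_inverse_def left_annihilator_bc_inverse_def right_ideal_subset_iff
    left_annihilator_subset_iff_right_multiple[OF assms] ..

theorem proposition2p5:
  fixes a b c y :: "'a::ring_1"
  shows "(regular c \<longrightarrow>
            (left_bc_inverse y a b c \<longleftrightarrow> right_annihilator_bc_inverse y a b c))
       \<and> (regular b \<longrightarrow>
            (right_bc_inverse y a b c \<longleftrightarrow> left_annihilator_bc_inverse y a b c))"
  by (simp add: left_bc_inverse_iff_right_annihilator_bc_inverse
      right_bc_inverse_iff_left_annihilator_bc_inverse)

end
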